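(* Let $(D,\prec,\succ,d)$ be a differential dendriform algebra of weight zero. Define, for $a,b\in D$, $$a\searrow b:=d(a)\succ b,\quad a\nearrow b:=a\succ d(b),\quad a\swarrow b:=d(a)\prec b,\quad a\nwarrow b:=a\prec d(b).$$ Then $(D,\searrow,\nearrow,\swarrow,\nwarrow)$ is a Novikov-dendriform algebra. Moreover, with $$a\vdash b:=a\searrow b+a\swarrow b=d(a)\succ b+d(a)\prec b,\qquad a\dashv b:=a\nearrow b+a\nwarrow b=a\succ d(b)+a\prec d(b),$$ the triple $(D,\vdash,\dashv)$ is a Novikov-associative algebra.
   Context: $\mathbf{k}$ is a commutative unital ring. A dendriform algebra is a $\mathbf{k}$-module $D$ with bilinear operations $\prec,\succ$ such that for all $a,b,c\in D$: $(a\prec b)\prec c=a\prec(b\prec c+b\succ c)$, $(a\succ b)\prec c=a\succ(b\prec c)$, $(a\prec b+a\succ b)\succ c=a\succ(b\succ c)$. A derivation of weight $\lambda$ on it is a linear map $d$ with $d(a\prec b)=d(a)\prec b+a\prec d(b)+\lambda d(a)\prec d(b)$ and $d(a\succ b)=d(a)\succ b+a\succ d(b)+\lambda d(a)\succ d(b)$ for all $a,b$; then $(D,\prec,\succ,d)$ is a differential dendriform algebra of weight $\lambda$. A Novikov-dendriform algebra is a $\mathbf{k}$-module $N$ with four bilinear operations $\searrow,\nearrow,\swarrow,\nwarrow$ such that for all $a,b,c\in N$: (i) $(a\swarrow b)\nwarrow c=a\swarrow(b\nearrow c+b\nwarrow c)$; (ii) $(a\searrow b)\nwarrow c=a\searrow(b\nwarrow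 c)$; (iii) $(a\searrow b+a\swarrow b)\nearrow c=a\searrow(b\nearrow c)$; (iv) $(a\nwarrow b)\nwarrow c-a\nwarrow(b\searrow c+b\swarrow c)=a\swarrow(b\searrow c+b\swarrow c)-(a\nwarrow b)\swarrow c$; (v) $(a\nearrow b)\nwarrow c-a\nearrow(b\swarrow c)=a\searrow(b\swarrow c)-(a\nearrow b)\swarrow c$; (vi) $(a\nearrow b+a\nwarrow b)\nearrow c-a\nearrow(b\searrow c)=a\searrow(b\searrow c)-(a\nearrow b+a\nwarrow b)\searrow c$. A Novikov-associative algebra is a $\mathbf{k}$-module $A$ with bilinear operations $\vdash,\dashv$ such that for all $a,b,c$: $(a\vdash b)\dashv c=a\vdash(b\dashv c)$ and $(a\dashv b)\dashv c-a\dashv(b\vdash c)=a\vdash(b\vdash c)-(a\dashv b)\vdash c$. *)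

theory Defs
  imports Complex_Main
begin

text \<open>A k-module D is modelled by a type 'd :: ab_group_add together with a scalar
multiplication smul satisfying the axioms of the HOL locale module (HOL.Modules),
over a commutative unital ring 'k.\<close>

definition bilinear_op :: "('k::comm_ring_1 \<Rightarrow> 'd::ab_group_add \<Rightarrow> 'd) \<Rightarrow> ('d \<Rightarrow> 'd \<Rightarrow> 'd) \<Rightarrow> bool" where
  "bilinear_op smul m \<longleftrightarrow>
     (\<forall>a b c. m (a + b) c = m a c + m b c) \<and>
     (\<forall>a b c. m a (b + c) = m a b + m a c) \<and>
     (\<forall>k a b. m (smul k a) b = smul k (m a b)) \<and>
     (\<forall>k a b. m a (smul k b) = smul k (m a b))"

definition linear_map :: "('k::comm_ring_1 \<Rightarrow> 'd::ab_group_add \<Rightarrow> 'd) \<Rightarrow> ('d \<Rightarrow> 'd) \<Rightarrow> bool" where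
  "linear_map smul f \<longleftrightarrow> (\<forall>a b. f (a + b) = f a + f b) \<and> (\<forall>k a. f (smul k a) = smul k (f a))"

definition dendriform :: "('k::comm_ring_1 \<Rightarrow> 'd::ab_group_add \<Rightarrow> 'd) \<Rightarrow> ('d \<Rightarrow> 'd \<Rightarrow> 'd) \<Rightarrow> ('d \<Rightarrow> 'd \<Rightarrow> 'd) \<Rightarrow> bool" where
  "dendriform smul prec succ \<longleftrightarrow> module smul \<and> bilinear_op smul prec \<and> bilinear_op smul succ \<and>
     (\<forall>a b c. prec (prec a b) c = prec a (prec b c + succ b c)) \<and>
     (\<forall>a b c. prec (succ a b) c = succ a (prec b c)) \<and>
     (\<forall>a b c. succ (prec a b + succ a b) c = succ a (succ b c))"

definition dendriform_derivation :: "('k::comm_ring_1 \<Rightarrow> 'd::ab_group_add \<Rightarrow> 'd) \<Rightarrow> 'k \<Rightarrow> ('d \<Rightarrow> 'd \<Rightarrow> 'd) \<Rightarrow> ('d \<Rightarrow> 'd \<Rightarrow> 'd) \<Rightarrow> ('d \<Rightarrow> 'd) \<Rightarrow> bool" where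
  "dendriform_derivation smul lam prec succ d \<longleftrightarrow> linear_map smul d \<and>
     (\<forall>a b. d (prec a b) = prec (d a) b + prec a (d b) + smul lam (prec (d a) (d b))) \<and>
     (\<forall>a b. d (succ a b) = succ (d a) b + succ a (d b) + smul lam (succ (d a) (d b)))"

definition differential_dendriform :: "('k::comm_ring_1 \<Rightarrow> 'd::ab_group_add \<Rightarrow> 'd) \<Rightarrow> 'k \<Rightarrow> ('d \<Rightarrow> 'd \<Rightarrow> 'd) \<Rightarrow> ('d \<Rightarrow> 'd \<Rightarrow> 'd) \<Rightarrow> ('d \<Rightarrow> 'd) \<Rightarrow> bool" where
  "differential_dendriform smul lam prec succ d \<longleftrightarrow> dendriform smul prec succ \<and> dendriform_derivation smul lam prec succ d"

text \<open>Operations in order: se = searrow, ne = nearrow, sw = swarrow, nw = nwarrow.\<close>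
definition novikov_dendriform :: "('k::comm_ring_1 \<Rightarrow> 'd::ab_group_add \<Rightarrow> 'd) \<Rightarrow> ('d \<Rightarrow> 'd \<Rightarrow> 'd) \<Rightarrow> ('d \<Rightarrow> 'd \<Rightarrow> 'd) \<Rightarrow> ('d \<Rightarrow> 'd \<Rightarrow> 'd) \<Rightarrow> ('d \<Rightarrow> 'd \<Rightarrow> 'd) \<Rightarrow> bool" where
  "novikov_dendriform smul se ne sw nw \<longleftrightarrow> module smul \<and>
     bilinear_op smul se \<and> bilinear_op smul ne \<and> bilinear_op smul sw \<and> bilinear_op smul nw \<and>
     (\<forall>a b c. nw (sw a b) c = sw a (ne b c + nw b c)) \<and>
     (\<forall>a b c. nw (se a b) c = se a (nw b c)) \<and>
     (\<forall>a b c. ne (se a b + sw a b) c = se a (ne b c)) \<and>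
     (\<forall>a b c. nw (nw a b) c - nw a (se b c + sw b c) = sw a (se b c + sw b c) - sw (nw a b) c) \<and>
     (\<forall>a b c. nw (ne a b) c - ne a (sw b c) = se a (sw b c) - sw (ne a b) c) \<and>
     (\<forall>a b c. ne (ne a b + nw a b) c - ne a (se b c) = se a (se b c) - se (ne a b + nw a b) c)"

definition novikov_associative :: "('k::comm_ring_1 \<Rightarrow> 'd::ab_group_add \<Rightarrow> 'd) \<Rightarrow> ('d \<Rightarrow> 'd \<Rightarrow> 'd) \<Rightarrow> ('d \<Rightarrow> 'd \<Rightarrow> 'd) \<Rightarrow> bool" where
  "novikov_associative smul vd dv \<longleftrightarrow> module smul \<and> bilinear_op smul vd \<and> bilinear_op smul dv \<and>
     (\<forall>a b c. dv (vd a b) c = vd a (dv b c)) \<and>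
     (\<forall>a b c. dv (dv a b) c - dv a (vd b c) = vd a (vd b c) - vd (dv a b) c)"

end

theory Submission
  imports Defs
begin

text \<open>Axioms (i)--(iii) of a Novikov-dendriform algebra are instances of the dendriform axioms,
since d occupies the same slots on both sides. For (iv)--(vi) one expands every d of a product by
the Leibniz rule, which has no correction term in weight zero; after the dendriform axioms the
terms containing d b cancel, and both sides reduce to the same expression in d (d b). In any
Novikov-dendriform algebra, adding (i)--(iii) resp. (iv)--(vi) gives the two Novikov-associative
axioms for the summed operations.\<close>

lemma bilinear_op_add:
  assumes "bilinear_op smul m"
  shows "m (a + b) c = m a c + m b c" "m a (b + c) = m a b + m a c"
  using assms unfolding bilinear_op_def by simp_all

lemma bilinear_op_zero:
  assumes "bilinear_op smul m"
  shows "m 0 c = 0" "m a 0 = 0"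
proof -
  have "m 0 c + m 0 c = m 0 c" and "m a 0 + m a 0 = m a 0"
    using bilinear_op_add[OF assms, of 0 0 c] bilinear_op_add[OF assms, of a 0 0] by simp_all
  then show "m 0 c = 0" "m a 0 = 0" by simp_all
qed

lemma bilinear_op_minus:
  assumes "bilinear_op smul m"
  shows "m (- a) c = - m a c" "m a (- b) = - m a b"
proof -
  have "m (- a) c + m a c = 0" and "m a (- b) + m a b = 0"
    using bilinear_op_add[OF assms, of "- a" a c] bilinear_op_add[OF assms, of a "- b" b]
      bilinear_op_zero[OF assms] by simp_all
  then show "m (- a) c = - m a c" "m a (- b) = - m a b" by (simp_all add: eq_neg_iff_add_eq_0)
qed

lemma bilinear_op_diff:
  assumes "bilinear_op smul m"
  shows "m (a - b) c = m a c - m b c" "m a (b - c) = m a b - m a c"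
  using bilinear_op_add[OF assms, of a "- b" c] bilinear_op_add[OF assms, of a b "- c"]
    bilinear_op_minus[OF assms] by simp_all

lemma linear_map_add:
  assumes "linear_map smul f"
  shows "f (a + b) = f a + f b"
  using assms unfolding linear_map_def by simp

lemma linear_map_diff:
  assumes "linear_map smul f"
  shows "f (a - b) = f a - f b"
  using linear_map_add[OF assms, of "a - b" b] by (simp add: eq_diff_eq)

lemma bilinear_op_sum:
  assumes "module smul" "bilinear_op smul m" "bilinear_op smul n"
  shows "bilinear_op smul (\<lambda>a b. m a b + n a b)"
  using assms unfolding bilinear_op_def by (simp add: module.scale_right_distrib algebra_simps)

lemma bilinear_op_comp_left:
  assumes "bilinear_op smul m" "linear_map smul f"
  shows "bilinear_op smul (\<lambda>a b. m (f a) b)"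
  using assms unfolding bilinear_op_def linear_map_def by simp

lemma bilinear_op_comp_right:
  assumes "bilinear_op smul m" "linear_map smul f"
  shows "bilinear_op smul (\<lambda>a b. m a (f b))"
  using assms unfolding bilinear_op_def linear_map_def by simp

lemma novikov_dendriform_imp_novikov_associative:
  assumes "novikov_dendriform smul se ne sw nw"
  shows "novikov_associative smul (\<lambda>a b. se a b + sw a b) (\<lambda>a b. ne a b + nw a b)"
proof -
  have bil: "bilinear_op smul se" "bilinear_op smul ne" "bilinear_op smul sw" "bilinear_op smul nw"
    and module: "module smul"
    using assms unfolding novikov_dendriform_def by simp_all
  note add = bilinear_op_add[OF bil(1)] bilinear_op_add[OF bil(2)]
    bilinear_op_add[OF bil(3)] bilinear_op_add[OF bil(4)]
  have "ne (se a b + sw a b) c + nw (se a b + sw a b) c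
      = se a (ne b c + nw b c) + sw a (ne b c + nw b c)" for a b c
    using assms unfolding novikov_dendriform_def by (simp add: add algebra_simps)
  moreover have "ne (ne a b + nw a b) c + nw (ne a b + nw a b) c
      - (ne a (se b c + sw b c) + nw a (se b c + sw b c))
    = se a (se b c + sw b c) + sw a (se b c + sw b c)
      - (se (ne a b + nw a b) c + sw (ne a b + nw a b) c)" for a b c
  proof -
    have "ne (ne a b + nw a b) c + nw (ne a b + nw a b) c
        - (ne a (se b c + sw b c) + nw a (se b c + sw b c))
      = (nw (nw a b) c - nw a (se b c + sw b c)) + (nw (ne a b) c - ne a (sw b c))
        + (ne (ne a b + nw a b) c - ne a (se b c))"
      by (simp add: add algebra_simps)
    also have "\<dots> = (sw a (se b c + sw b c) - sw (nw a b) c) + (se a (sw b c) - sw (ne a b) c)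
        + (se a (se b c) - se (ne a b + nw a b) c)"
      using assms unfolding novikov_dendriform_def by simp
    also have "\<dots> = se a (se b c + sw b c) + sw a (se b c + sw b c)
        - (se (ne a b + nw a b) c + sw (ne a b + nw a b) c)"
      by (simp add: add algebra_simps)
    finally show ?thesis .
  qed
  ultimately show ?thesis
    unfolding novikov_associative_def
    using module bilinear_op_sum[OF module bil(1,3)] bilinear_op_sum[OF module bil(2,4)]
    by (simp add: add)
qed

locale weight_zero_differential_dendriform =
  fixes smul :: "'k::comm_ring_1 \<Rightarrow> 'd::ab_group_add \<Rightarrow> 'd"
    and prec succ :: "'d \<Rightarrow> 'd \<Rightarrow> 'd" and d :: "'d \<Rightarrow> 'd"
  assumes differential_dendriform: "differential_dendriform smul 0 prec succ d"
begin

lemma module: "module smul"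
  and bilinear_prec: "bilinear_op smul prec"
  and bilinear_succ: "bilinear_op smul succ"
  and linear_d: "linear_map smul d"
  and prec_prec: "prec (prec a b) c = prec a (prec b c + succ b c)"
  and prec_succ: "prec (succ a b) c = succ a (prec b c)"
  and succ_sum: "succ (prec a b + succ a b) c = succ a (succ b c)"
  using differential_dendriform
  unfolding differential_dendriform_def dendriform_def dendriform_derivation_def by simp_all

lemma d_prec: "d (prec a b) = prec (d a) b + prec a (d b)"
  and d_succ: "d (succ a b) = succ (d a) b + succ a (d b)"
  using differential_dendriform module.scale_zero_left[OF module]
  unfolding differential_dendriform_def dendriform_derivation_def by simp_all

lemmas expand_derivation = bilinear_op_add[OF bilinear_prec] bilinear_op_add[OF bilinear_succ]
  bilinear_op_diff[OF bilinear_prec] bilinear_op_diff[OF bilinear_succ]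
  bilinear_op_minus[OF bilinear_prec] bilinear_op_minus[OF bilinear_succ]
  linear_map_add[OF linear_d] linear_map_diff[OF linear_d] d_prec d_succ

lemma succ_prec: "succ (prec a b) c = succ a (succ b c) - succ (succ a b) c"
  using succ_sum[of a b c] bilinear_op_add(1)[OF bilinear_succ, of "prec a b" "succ a b" c]
  by (simp add: eq_diff_eq)

lemma novikov_i: "prec (prec (d a) b) (d c) = prec (d a) (succ b (d c) + prec b (d c))"
  by (simp add: prec_prec add.commute)

lemma novikov_ii: "prec (succ (d a) b) (d c) = succ (d a) (prec b (d c))"
  by (rule prec_succ)

lemma novikov_iii: "succ (succ (d a) b + prec (d a) b) (d c) = succ (d a) (succ b (d c))"
  by (simp add: succ_sum add.commute)

lemma novikov_iv:
  "prec (prec a (d b)) (d c) - prec a (d (succ (d b) c + prec (d b) c))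
     = prec (d a) (succ (d b) c + prec (d b) c) - prec (d (prec a (d b))) c"
proof -
  have "prec (prec a (d b)) (d c) - prec a (d (succ (d b) c + prec (d b) c))
      = - prec a (prec (d (d b)) c + succ (d (d b)) c)"
    by (simp add: prec_prec expand_derivation algebra_simps)
  also have "\<dots> = prec (d a) (succ (d b) c + prec (d b) c) - prec (d (prec a (d b))) c"
    by (simp add: prec_prec expand_derivation algebra_simps)
  finally show ?thesis .
qed

lemma novikov_v:
  "prec (succ a (d b)) (d c) - succ a (d (prec (d b) c))
     = succ (d a) (prec (d b) c) - prec (d (succ a (d b))) c"
proof -
  have "prec (succ a (d b)) (d c) - succ a (d (prec (d b) c)) = - succ a (prec (d (d b)) c)"
    by (simp add: prec_succ expand_derivation algebra_simps)
  also have "\<dots> = succ (d a) (prec (d b) c) - prec (d (succ a (d b))) c"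
    by (simp add: prec_succ expand_derivation)
  finally show ?thesis .
qed

lemma novikov_vi:
  "succ (succ a (d b) + prec a (d b)) (d c) - succ a (d (succ (d b) c))
     = succ (d a) (succ (d b) c) - succ (d (succ a (d b) + prec a (d b))) c"
proof -
  have "succ (succ a (d b) + prec a (d b)) (d c) - succ a (d (succ (d b) c))
      = - succ a (succ (d (d b)) c)"
    by (simp add: succ_prec expand_derivation algebra_simps)
  also have "\<dots> = succ (d a) (succ (d b) c) - succ (d (succ a (d b) + prec a (d b))) c"
    by (simp add: succ_prec expand_derivation algebra_simps)
  finally show ?thesis .
qed

lemma novikov_dendriform_of_derivation:
  "novikov_dendriform smul (\<lambda>a b. succ (d a) b) (\<lambda>a b. succ a (d b))
     (\<lambda>a b. prec (d a) b) (\<lambda>a b. prec a (d b))"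
  unfolding novikov_dendriform_def
  using module bilinear_op_comp_left[OF bilinear_succ linear_d]
    bilinear_op_comp_right[OF bilinear_succ linear_d]
    bilinear_op_comp_left[OF bilinear_prec linear_d]
    bilinear_op_comp_right[OF bilinear_prec linear_d]
  by (intro conjI allI novikov_i novikov_ii novikov_iii novikov_iv novikov_v novikov_vi)

end

theorem proposition3p12:
  fixes smul :: "'k::comm_ring_1 \<Rightarrow> 'd::ab_group_add \<Rightarrow> 'd"
    and prec succ :: "'d \<Rightarrow> 'd \<Rightarrow> 'd" and d :: "'d \<Rightarrow> 'd"
  assumes "differential_dendriform smul 0 prec succ d"
  shows "novikov_dendriform smul (\<lambda>a b. succ (d a) b) (\<lambda>a b. succ a (d b))
           (\<lambda>a b. prec (d a) b) (\<lambda>a b. prec a (d b))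
       \<and> novikov_associative smul (\<lambda>a b. succ (d a) b + prec (d a) b)
           (\<lambda>a b. succ a (d b) + prec a (d b))"
proof -
  interpret weight_zero_differential_dendriform smul prec succ d
    using assms by unfold_locales
  show ?thesis
    using novikov_dendriform_of_derivation novikov_dendriform_imp_novikov_associative by blast
qed

end
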